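(* If $h:[0,\infty)\to[\frac{\beta u_0-1}{r},\frac{\beta u_0}{r}]$ is a decreasing solution to the HJB equation with $h'(0)=0$, then there exist $z_f\in(0,d]$, $z_g\in[d,\infty)$ and real constants $A_1,B_1,A_2,B_2,a_1,b_1,a_2,b_2$ such that, with $\underline f(z)=A_1e^{\theta_1(0)z}+B_1e^{-\theta_2(0)z}$, $\bar f(z)=\frac{\beta u_0}{r}+A_2e^{\theta_1(u_0)z}+B_2e^{-\theta_2(u_0)z}$, $\underline g(z)=-\frac1r+a_1e^{\theta_1(0)z}+b_1e^{-\theta_2(0)z}$, $\bar g(z)=\frac{\beta u_0-1}{r}+a_2e^{\theta_1(u_0)z}+b_2e^{-\theta_2(u_0)z}$, $$h=\bar f\,\mathbf 1_{[0,z_f]}+\underline f\,\mathbf 1_{(z_f,d]}+\underline g\,\mathbf 1_{(d,z_g]}+\bar g\,\mathbf 1_{[z_g,\infty)\cap(d,\infty)}.$$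
   Context: Fix $\mu\in\mathbb R$, $\sigma>0$, $u_0>0$, $r>0$, $\beta>0$, $d>0$. For $u\in[0,u_0]$ let $\theta_1(u)=\frac{\sqrt{(\mu-u)^2+2r\sigma^2}+(\mu-u)}{\sigma^2}$ and $\theta_2(u)=\frac{\sqrt{(\mu-u)^2+2r\sigma^2}-(\mu-u)}{\sigma^2}$. The HJB equation is $$-rh(z)-\mu h'(z)+\tfrac{\sigma^2}{2}h''(z)+\sup_{u\in[0,u_0]}\{(\beta+h'(z))u\}=\mathbf 1_{\{z>d\}}.$$ A solution to the HJB equation is a function $h:[0,\infty)\to[\frac{\beta u_0-1}{r},\frac{\beta u_0}{r}]$ that is continuously differentiable on $[0,\infty)$, twice continuously differentiable on $[0,d]$ and on $(d,\infty)$ respectively (with $h'(0),h''(0)$ the right derivatives and $h''(d)$ the left second derivative), and satisfies the HJB equation for all $z\ge0$. *)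

theory Defs
  imports "HOL-Analysis.Analysis"
begin

definition theta1 :: "real \<Rightarrow> real \<Rightarrow> real \<Rightarrow> real \<Rightarrow> real" where
  "theta1 \<mu> \<sigma> r u = (sqrt ((\<mu> - u)\<^sup>2 + 2 * r * \<sigma>\<^sup>2) + (\<mu> - u)) / \<sigma>\<^sup>2"

definition theta2 :: "real \<Rightarrow> real \<Rightarrow> real \<Rightarrow> real \<Rightarrow> real" where
  "theta2 \<mu> \<sigma> r u = (sqrt ((\<mu> - u)\<^sup>2 + 2 * r * \<sigma>\<^sup>2) - (\<mu> - u)) / \<sigma>\<^sup>2"

text \<open>Solution of the HJB equation. h1 is the first derivative on [0,oo)
  (one-sided at 0), continuous there; h2 is the second derivative, taken within [0,d]
  on [0,d] (so one-sided at 0 and left-sided at d) and two-sided on (d,oo), continuous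
  on [0,d] and on (d,oo) respectively.\<close>
definition hjb_solution ::
  "real \<Rightarrow> real \<Rightarrow> real \<Rightarrow> real \<Rightarrow> real \<Rightarrow> real \<Rightarrow> (real \<Rightarrow> real) \<Rightarrow> bool" where
  "hjb_solution \<mu> \<sigma> u0 r \<beta> d h \<longleftrightarrow>
     (\<forall>z\<ge>0. (\<beta> * u0 - 1) / r \<le> h z \<and> h z \<le> \<beta> * u0 / r) \<and>
     (\<exists>h1 h2.
        (\<forall>z\<ge>0. (h has_real_derivative h1 z) (at z within {0..})) \<and>
        continuous_on {0..} h1 \<and>
        (\<forall>z\<in>{0..d}. (h1 has_real_derivative h2 z) (at z within {0..d})) \<and>
        continuous_on {0..d} h2 \<and>
        (\<forall>z>d. (h1 has_real_derivative h2 z) (at z)) \<and>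
        continuous_on {d<..} h2 \<and>
        (\<forall>z\<ge>0. - r * h z - \<mu> * h1 z + \<sigma>\<^sup>2 / 2 * h2 z
                  + (SUP u\<in>{0..u0}. (\<beta> + h1 z) * u)
                = (if z > d then 1 else 0)))"

end

theory Submission
  imports Defs
begin

(* Where the maximising control u is constant (u = u0 while h' >= -beta, u = 0 while
   h' <= -beta) and the indicator of z > d is constant, the HJB equation is a linear ODE with
   characteristic roots theta1(u) and -theta2(u), so h is a combination of the two exponentials
   there.  It remains to see that h' crosses -beta at most once in [0,d] and at most once in
   (d,oo).  The key point is that h' has no interior minimum below -beta: there h'' = 0 and u = 0,
   so G = 1{z>d} + r h + mu h' vanishes and has derivative r h' < 0; hence G < 0 just to the
   right, and the equation gives sigma^2/2 h'' <= G < 0, so h' keeps decreasing.  Therefore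
   {h' >= -beta} is an interval in each region.  In [0,d] it contains 0 because h'(0) = 0; in
   (d,oo) it is unbounded because h' < -beta on a half-line would push h out of its range, which
   has width 1/r. *)

lemma ode2_first_integral:
  fixes g g1 g2 :: "real \<Rightarrow> real"
  assumes "convex s"
    and g1: "\<And>x. x \<in> s \<Longrightarrow> (g has_real_derivative g1 x) (at x within s)"
    and g2: "\<And>x. x \<in> s \<Longrightarrow> (g1 has_real_derivative g2 x) (at x within s)"
    and ode: "\<And>x. x \<in> s \<Longrightarrow> g2 x = (l1 + l2) * g1 x - l1 * l2 * g x"
  shows "\<exists>C. \<forall>x\<in>s. g1 x - l2 * g x = C * exp (l1 * x)"
proof -
  have "\<exists>C. \<forall>x\<in>s. (g1 x - l2 * g x) * exp (- l1 * x) = C"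
  proof (rule has_field_derivative_zero_constant[OF \<open>convex s\<close>])
    fix x assume x: "x \<in> s"
    have "((\<lambda>x. (g1 x - l2 * g x) * exp (- l1 * x)) has_real_derivative
        (g2 x - l2 * g1 x - l1 * (g1 x - l2 * g x)) * exp (- l1 * x)) (at x within s)"
      using g1[OF x] g2[OF x] by (auto intro!: derivative_eq_intros simp: algebra_simps)
    then show "((\<lambda>x. (g1 x - l2 * g x) * exp (- l1 * x)) has_real_derivative 0) (at x within s)"
      using ode[OF x] by (simp add: algebra_simps)
  qed
  then obtain C where "\<And>x. x \<in> s \<Longrightarrow> (g1 x - l2 * g x) * exp (- l1 * x) = C" by blast
  then have "g1 x - l2 * g x = C * exp (l1 * x)" if "x \<in> s" for x
    using that by (auto simp: exp_minus field_simps)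
  then show ?thesis by blast
qed

lemma ode2_exp_solution:
  fixes g g1 g2 :: "real \<Rightarrow> real"
  assumes "convex s" "l1 \<noteq> l2"
    and g1: "\<And>x. x \<in> s \<Longrightarrow> (g has_real_derivative g1 x) (at x within s)"
    and g2: "\<And>x. x \<in> s \<Longrightarrow> (g1 has_real_derivative g2 x) (at x within s)"
    and ode: "\<And>x. x \<in> s \<Longrightarrow> g2 x = (l1 + l2) * g1 x - l1 * l2 * g x"
  shows "\<exists>A B. \<forall>x\<in>s. g x = A * exp (l1 * x) + B * exp (l2 * x)"
proof -
  obtain C where C: "\<forall>x\<in>s. g1 x - l2 * g x = C * exp (l1 * x)"
    using ode2_first_integral[OF assms(1) g1 g2 ode] by blast
  obtain D where D: "\<forall>x\<in>s. g1 x - l1 * g x = D * exp (l2 * x)"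
    using ode2_first_integral[OF assms(1) g1 g2, of l2 l1] ode by (auto simp: algebra_simps)
  have "g x = C / (l1 - l2) * exp (l1 * x) + - D / (l1 - l2) * exp (l2 * x)" if "x \<in> s" for x
  proof -
    have "(l1 - l2) * g x = C * exp (l1 * x) - D * exp (l2 * x)"
      using C D that by (auto simp: algebra_simps)
    then have "g x = (C * exp (l1 * x) - D * exp (l2 * x)) / (l1 - l2)"
      using \<open>l1 \<noteq> l2\<close> by (simp add: eq_divide_eq mult.commute)
    then show ?thesis
      by (simp add: diff_divide_distrib)
  qed
  then show ?thesis by blast
qed

lemma
  assumes "\<sigma> > 0" "r > 0"
  shows theta1_add_theta2_pos: "theta1 \<mu> \<sigma> r u + theta2 \<mu> \<sigma> r u > 0"
    and theta1_sub_theta2: "theta1 \<mu> \<sigma> r u - theta2 \<mu> \<sigma> r u = 2 * (\<mu> - u) / \<sigma>\<^sup>2"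
    and theta1_mult_theta2: "theta1 \<mu> \<sigma> r u * theta2 \<mu> \<sigma> r u = 2 * r / \<sigma>\<^sup>2"
proof -
  have discr_pos: "(\<mu> - u)\<^sup>2 + 2 * r * \<sigma>\<^sup>2 > 0"
    using assms by (simp add: add_nonneg_pos)
  then show "theta1 \<mu> \<sigma> r u + theta2 \<mu> \<sigma> r u > 0"
    unfolding theta1_def theta2_def using assms by (simp add: add_divide_distrib[symmetric])
  show "theta1 \<mu> \<sigma> r u - theta2 \<mu> \<sigma> r u = 2 * (\<mu> - u) / \<sigma>\<^sup>2"
    unfolding theta1_def theta2_def by (simp add: diff_divide_distrib[symmetric])
  show "theta1 \<mu> \<sigma> r u * theta2 \<mu> \<sigma> r u = 2 * r / \<sigma>\<^sup>2"
    unfolding theta1_def theta2_def using assms discr_pos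
    by (simp add: field_simps power2_eq_square)
qed

lemma constant_control_hjb_solution:
  fixes h h1 h2 :: "real \<Rightarrow> real"
  assumes "\<sigma> > 0" "r > 0" "convex s"
    and h1: "\<And>x. x \<in> s \<Longrightarrow> (h has_real_derivative h1 x) (at x within s)"
    and h2: "\<And>x. x \<in> s \<Longrightarrow> (h1 has_real_derivative h2 x) (at x within s)"
    and hjb: "\<And>x. x \<in> s \<Longrightarrow> - r * h x - \<mu> * h1 x + \<sigma>\<^sup>2 / 2 * h2 x + (\<beta> + h1 x) * u = R"
  shows "\<exists>A B. \<forall>x\<in>s. h x = (\<beta> * u - R) / r
           + A * exp (theta1 \<mu> \<sigma> r u * x) + B * exp (- theta2 \<mu> \<sigma> r u * x)"
proof -
  let ?l1 = "theta1 \<mu> \<sigma> r u" and ?l2 = "- theta2 \<mu> \<sigma> r u"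
  have "\<exists>A B. \<forall>x\<in>s. h x - (\<beta> * u - R) / r = A * exp (?l1 * x) + B * exp (?l2 * x)"
  proof (rule ode2_exp_solution[OF \<open>convex s\<close>])
    show "?l1 \<noteq> ?l2"
      using theta1_add_theta2_pos[OF assms(1,2), of \<mu> u] by linarith
    fix x assume x: "x \<in> s"
    show "((\<lambda>x. h x - (\<beta> * u - R) / r) has_real_derivative h1 x) (at x within s)"
      using h1[OF x] by (auto intro!: derivative_eq_intros)
    show "(h1 has_real_derivative h2 x) (at x within s)"
      using h2[OF x] .
    have h2_eq: "h2 x = 2 / \<sigma>\<^sup>2 * (R + r * h x + \<mu> * h1 x - (\<beta> + h1 x) * u)"
      using hjb[OF x] assms(1) by (simp add: field_simps)
    have vieta: "?l1 + ?l2 = 2 * (\<mu> - u) / \<sigma>\<^sup>2" "?l1 * ?l2 = - (2 * r / \<sigma>\<^sup>2)"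
      using theta1_sub_theta2[OF assms(1,2)] theta1_mult_theta2[OF assms(1,2)] by simp_all
    show "h2 x = (?l1 + ?l2) * h1 x - ?l1 * ?l2 * (h x - (\<beta> * u - R) / r)"
      unfolding h2_eq vieta using assms(1,2) by (simp add: field_simps)
  qed
  then show ?thesis by (simp add: algebra_simps)
qed

lemma SUP_mult_atLeastAtMost:
  fixes c u0 :: real
  assumes "0 \<le> u0"
  shows "(SUP u\<in>{0..u0}. c * u) = max c 0 * u0"
proof (cases "0 \<le> c")
  case True
  then show ?thesis
    using assms by (auto intro!: cSup_eq_maximum simp: mult_left_mono)
next
  case False
  then have "(SUP u\<in>{0..u0}. c * u) = c * 0"
    using assms by (intro cSup_eq_maximum) (auto simp: mult_nonpos_nonneg)
  then show ?thesis using False by simp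
qed

lemma crossing_point_of_upward_closed_sublevel:
  fixes f :: "real \<Rightarrow> real"
  assumes "a < b" and cont: "continuous_on {a..b} f" and "c < f a"
    and stays_below: "\<And>s t. a \<le> s \<Longrightarrow> s \<le> t \<Longrightarrow> t \<le> b \<Longrightarrow> f s < c \<Longrightarrow> f t < c"
  shows "\<exists>z\<in>{a<..b}. (\<forall>x\<in>{a..z}. c \<le> f x) \<and> (\<forall>x\<in>{z<..b}. f x \<le> c)"
proof (cases "\<exists>x\<in>{a..b}. f x < c")
  case False
  then show ?thesis
    using \<open>a < b\<close> by (intro bexI[of _ b]) (auto simp: not_less)
next
  case True
  define S where "S = {x\<in>{a..b}. f x < c}"
  have S: "S \<noteq> {}" "bdd_below S"
    using True by (auto simp: S_def)
  define z where "z = Inf S"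
  obtain t0 where "t0 \<in> S"
    using S(1) by blast
  have "a \<le> z"
    unfolding z_def by (rule cInf_greatest[OF S(1)]) (simp add: S_def)
  have "z \<le> t0"
    unfolding z_def by (rule cInf_lower[OF \<open>t0 \<in> S\<close> S(2)])
  then have "z \<le> b"
    using \<open>t0 \<in> S\<close> by (simp add: S_def)
  have below_right: "f x < c" if x: "z < x" "x \<le> b" for x
  proof -
    obtain t where "t \<in> S" "t < x"
      using x(1) by (auto simp: z_def cInf_less_iff[OF S])
    then show ?thesis
      using stays_below[of t x] x unfolding S_def by auto
  qed
  have above_left: "c \<le> f x" if "a \<le> x" "x < z" for x
  proof (rule ccontr)
    assume "\<not> c \<le> f x"
    then have "x \<in> S"
      using that \<open>z \<le> b\<close> unfolding S_def by simp
    then show False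
      using cInf_lower[OF _ S(2)] that unfolding z_def by fastforce
  qed
  have "f z \<le> c"
  proof (rule continuous_le_on_closure[where S = S and f = f])
    have "closure S \<subseteq> {a..b}"
      by (rule closure_minimal) (auto simp: S_def)
    then show "continuous_on (closure S) f"
      using cont continuous_on_subset by blast
    show "z \<in> closure S"
      unfolding z_def using closure_contains_Inf[OF S] .
  qed (auto simp: S_def)
  then have "a < z"
    using \<open>a \<le> z\<close> \<open>c < f a\<close> by (cases "a = z") auto
  have "c \<le> f z"
  proof (rule continuous_ge_on_closure[where S = "{a..<z}" and f = f])
    show "continuous_on (closure {a..<z}) f"
      by (rule continuous_on_subset[OF cont]) (use \<open>a < z\<close> \<open>z \<le> b\<close> in auto)
  qed (use \<open>a < z\<close> above_left in auto)
  show ?thesis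
  proof (intro bexI conjI ballI)
    fix x assume "x \<in> {a..z}"
    then show "c \<le> f x"
      using above_left[of x] \<open>c \<le> f z\<close> by (cases "x = z") auto
  next
    fix x assume "x \<in> {z<..b}"
    then show "f x \<le> c"
      using below_right[of x] by auto
  qed (use \<open>a < z\<close> \<open>z \<le> b\<close> in auto)
qed

lemma crossing_point_of_downward_closed_sublevel:
  fixes f :: "real \<Rightarrow> real"
  assumes cont: "continuous_on {a<..} f" and "a < b" "c \<le> f b"
    and below_before: "\<And>s t. a < s \<Longrightarrow> s \<le> t \<Longrightarrow> f t < c \<Longrightarrow> f s < c"
  shows "\<exists>z\<ge>a. (\<forall>x\<in>{a<..z}. f x \<le> c) \<and> (\<forall>x. z \<le> x \<and> a < x \<longrightarrow> c \<le> f x)"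
proof (cases "\<exists>x>a. f x < c")
  case False
  then have "c \<le> f x" if "a < x" for x
    using that not_less by blast
  then show ?thesis by (intro exI[of _ a]) auto
next
  case True
  define S where "S = {x. a < x \<and> f x < c}"
  have "x < b" if "x \<in> S" for x
    using below_before[of b x] that \<open>a < b\<close> \<open>c \<le> f b\<close> unfolding S_def by force
  then have "bdd_above S"
    by (meson bdd_aboveI less_imp_le)
  moreover have "S \<noteq> {}"
    using True by (simp add: S_def)
  ultimately have S: "S \<noteq> {}" "bdd_above S"
    by simp_all
  define z where "z = Sup S"
  have "a < z"
    using True cSup_upper[OF _ S(2)] unfolding z_def S_def by force
  have below_left: "f x < c" if x: "a < x" "x < z" for x
  proof -
    obtain t where "t \<in> S" "x < t"
      using x(2) by (auto simp: z_def less_cSup_iff[OF S])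
    then show ?thesis
      using below_before[of x t] x unfolding S_def by auto
  qed
  have above_right: "c \<le> f x" if "z < x" for x
    using cSup_upper[OF _ S(2), of x] that \<open>a < z\<close> unfolding z_def S_def by force
  have "f z \<le> c"
  proof (rule continuous_le_on_closure[where S = "{(a + z) / 2..<z}" and f = f])
    show "continuous_on (closure {(a + z) / 2..<z}) f"
      by (rule continuous_on_subset[OF cont]) (use \<open>a < z\<close> in auto)
  qed (use \<open>a < z\<close> below_left in \<open>auto intro: less_imp_le\<close>)
  have "c \<le> f z"
  proof (rule continuous_ge_on_closure[where S = "{z<..z + 1}" and f = f])
    show "continuous_on (closure {z<..z + 1}) f"
      by (rule continuous_on_subset[OF cont]) (use \<open>a < z\<close> in auto)
  qed (use above_right in auto)
  show ?thesis
  proof (intro exI conjI allI ballI impI)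
    fix x assume "x \<in> {a<..z}"
    then show "f x \<le> c"
      using below_left[of x] \<open>f z \<le> c\<close> by (cases "x = z") auto
  next
    fix x assume "z \<le> x \<and> a < x"
    then show "c \<le> f x"
      using above_right[of x] \<open>c \<le> f z\<close> by (cases "x = z") auto
  qed (use \<open>a < z\<close> in auto)
qed

locale hjb_classical_solution =
  fixes \<mu> \<sigma> u0 r \<beta> d :: real and h h1 h2 :: "real \<Rightarrow> real"
  assumes sigma_pos: "\<sigma> > 0" and u0_pos: "u0 > 0" and r_pos: "r > 0"
    and beta_pos: "\<beta> > 0" and d_pos: "d > 0"
    and h_bounds: "\<And>z. 0 \<le> z \<Longrightarrow> (\<beta> * u0 - 1) / r \<le> h z \<and> h z \<le> \<beta> * u0 / r"
    and h_deriv: "\<And>z. 0 \<le> z \<Longrightarrow> (h has_real_derivative h1 z) (at z within {0..})"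
    and h1_cont: "continuous_on {0..} h1"
    and h1_deriv_le_d: "\<And>z. z \<in> {0..d} \<Longrightarrow> (h1 has_real_derivative h2 z) (at z within {0..d})"
    and h1_deriv_gt_d: "\<And>z. d < z \<Longrightarrow> (h1 has_real_derivative h2 z) (at z)"
    and hjb: "\<And>z. 0 \<le> z \<Longrightarrow> - r * h z - \<mu> * h1 z + \<sigma>\<^sup>2 / 2 * h2 z
               + (SUP u\<in>{0..u0}. (\<beta> + h1 z) * u) = (if d < z then 1 else 0)"
begin

lemma hjb_max:
  "0 \<le> z \<Longrightarrow> - r * h z - \<mu> * h1 z + \<sigma>\<^sup>2 / 2 * h2 z + max (\<beta> + h1 z) 0 * u0
     = (if d < z then 1 else 0)"
  using hjb SUP_mult_atLeastAtMost[of u0] u0_pos by simp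

lemma h_has_derivative_at:
  assumes "0 < z"
  shows "(h has_real_derivative h1 z) (at z)"
proof -
  have "(h has_real_derivative h1 z) (at z within {0<..})"
    by (rule DERIV_subset[OF h_deriv]) (use assms in auto)
  moreover have "at z within {0<..} = at z"
    using assms by (intro at_within_open) auto
  ultimately show ?thesis
    by simp
qed

lemma h1_has_derivative_at: "0 < z \<Longrightarrow> z \<noteq> d \<Longrightarrow> (h1 has_real_derivative h2 z) (at z)"
proof (cases "d < z")
  case False
  assume "0 < z" "z \<noteq> d"
  with False have "at z within {0..d} = at z"
    by (intro at_within_interior) auto
  then show ?thesis
    using h1_deriv_le_d[of z] \<open>0 < z\<close> False by simp
qed (use h1_deriv_gt_d in simp)

lemma h1_decreases_right_of_critical_point:
  assumes "0 < m" "m \<noteq> d" "h1 m < - \<beta>" "h2 m = 0"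
  shows "\<exists>\<delta>>0. \<forall>y. m < y \<and> y < m + \<delta> \<longrightarrow> h1 y < h1 m"
proof -
  define R where "R = (if d < m then 1 else 0 :: real)"
  define G where "G x = R + r * h x + \<mu> * h1 x" for x
  define \<epsilon> where "\<epsilon> = \<bar>m - d\<bar>"
  have "\<epsilon> > 0"
    using \<open>m \<noteq> d\<close> by (simp add: \<epsilon>_def)
  have same_side: "0 < y \<and> y \<noteq> d \<and> (if d < y then 1 else 0) = R" if "m \<le> y" "y < m + \<epsilon>" for y
    using that \<open>0 < m\<close> by (auto simp: \<epsilon>_def R_def abs_if split: if_splits)
  have h2_le_G: "\<sigma>\<^sup>2 / 2 * h2 y \<le> G y" if "m \<le> y" "y < m + \<epsilon>" for y
  proof -
    have "0 \<le> max (\<beta> + h1 y) 0 * u0"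
      using u0_pos by simp
    then show ?thesis
      using hjb_max[of y] same_side[OF that] unfolding G_def by auto
  qed
  have "G m = 0"
    using hjb_max[of m] same_side[of m] \<open>\<epsilon> > 0\<close> assms(3,4) unfolding G_def by (simp add: max_def)
  have "(G has_real_derivative r * h1 m + \<mu> * h2 m) (at m)"
    unfolding G_def using h_has_derivative_at h1_has_derivative_at assms(1,2)
    by (auto intro!: derivative_eq_intros)
  moreover have "r * h1 m + \<mu> * h2 m < 0"
    using assms(3,4) r_pos beta_pos by (simp add: mult_pos_neg)
  ultimately obtain \<delta>0 where "\<delta>0 > 0" and G_neg: "\<And>e. 0 < e \<Longrightarrow> e < \<delta>0 \<Longrightarrow> G (m + e) < 0"
    using DERIV_neg_dec_right \<open>G m = 0\<close> by metis
  have h2_neg: "h2 y < 0" if "m < y" "y < m + min \<epsilon> \<delta>0" for y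
  proof -
    have "y < m + \<epsilon>" "y - m < \<delta>0"
      using that(2) by auto
    then have "\<sigma>\<^sup>2 / 2 * h2 y < 0"
      using h2_le_G[of y] G_neg[of "y - m"] that(1) by simp
    then show ?thesis
      using sigma_pos by (simp add: mult_less_0_iff)
  qed
  have "h1 y < h1 m" if "m < y" "y < m + min \<epsilon> \<delta>0" for y
  proof (rule DERIV_neg_imp_decreasing_open[OF \<open>m < y\<close>])
    show "\<exists>l. (h1 has_real_derivative l) (at x) \<and> l < 0" if x: "m < x" "x < y" for x
    proof -
      have "x < m + min \<epsilon> \<delta>0"
        using x(2) \<open>y < m + min \<epsilon> \<delta>0\<close> by linarith
      then show ?thesis
        using h1_has_derivative_at[of x] same_side[of x] h2_neg[of x] x(1) by auto
    qed
    show "continuous_on {m..y} h1"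
      by (rule continuous_on_subset[OF h1_cont]) (use \<open>0 < m\<close> in auto)
  qed
  then show ?thesis
    using \<open>\<epsilon> > 0\<close> \<open>\<delta>0 > 0\<close> by (intro exI[of _ "min \<epsilon> \<delta>0"]) auto
qed

lemma h1_no_dip_below:
  assumes region: "{a..b} \<subseteq> {0..d} \<or> {a..b} \<subseteq> {d<..}"
    and "- \<beta> \<le> h1 a" "- \<beta> \<le> h1 b" "t \<in> {a..b}"
  shows "- \<beta> \<le> h1 t"
proof (rule ccontr)
  assume "\<not> - \<beta> \<le> h1 t"
  have "continuous_on {a..b} h1"
    by (rule continuous_on_subset[OF h1_cont]) (use region d_pos in auto)
  then obtain m where m: "m \<in> {a..b}" and min: "\<And>y. y \<in> {a..b} \<Longrightarrow> h1 m \<le> h1 y"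
    using continuous_attains_inf[of "{a..b}" h1] \<open>t \<in> {a..b}\<close> by auto
  have "h1 m < - \<beta>"
    using min[OF \<open>t \<in> {a..b}\<close>] \<open>\<not> - \<beta> \<le> h1 t\<close> by simp
  then have "a < m" "m < b"
    using m assms(2,3) by (auto simp: order_le_less)
  then have "a \<in> {a..b}" "b \<in> {a..b}"
    by auto
  then have "(0 \<le> a \<and> b \<le> d) \<or> d < a"
    using region by (meson atLeastAtMost_iff greaterThan_iff subsetD)
  then have "0 < m" "m \<noteq> d"
    using \<open>a < m\<close> \<open>m < b\<close> d_pos by auto
  have "h2 m = 0"
  proof (rule DERIV_local_min[OF h1_has_derivative_at[OF \<open>0 < m\<close> \<open>m \<noteq> d\<close>]])
    show "0 < min (m - a) (b - m)"
      using \<open>a < m\<close> \<open>m < b\<close> by simp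
    show "\<forall>y. \<bar>m - y\<bar> < min (m - a) (b - m) \<longrightarrow> h1 m \<le> h1 y"
      using min by (auto simp: abs_less_iff)
  qed
  then obtain \<delta> where "\<delta> > 0" and decr: "\<And>y. m < y \<Longrightarrow> y < m + \<delta> \<Longrightarrow> h1 y < h1 m"
    using h1_decreases_right_of_critical_point \<open>0 < m\<close> \<open>m \<noteq> d\<close> \<open>h1 m < - \<beta>\<close> by blast
  define y where "y = m + min \<delta> (b - m) / 2"
  have "m < y" "y < m + \<delta>" "y \<le> b"
    using \<open>\<delta> > 0\<close> \<open>m < b\<close> by (auto simp: y_def min_def field_simps)
  then show False
    using decr[of y] min[of y] \<open>a < m\<close> by auto
qed

lemma h1_not_eventually_below:
  assumes "0 < t"
  shows "\<exists>b>t. - \<beta> \<le> h1 b"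
proof (rule ccontr)
  assume "\<not> ?thesis"
  then have steep: "\<And>b. t < b \<Longrightarrow> h1 b < - \<beta>"
    by (meson not_le)
  define N where "N = 1 / (r * \<beta>) + 1"
  have "N > 0"
    unfolding N_def using r_pos beta_pos by (intro add_nonneg_pos) simp_all
  obtain \<xi> where "t < \<xi>" "h (t + N) - h t = N * h1 \<xi>"
    using MVT2[of t "t + N" h h1] h_has_derivative_at \<open>0 < t\<close> \<open>N > 0\<close> by auto
  moreover have "N * h1 \<xi> < N * - \<beta>"
    using mult_strict_left_mono[OF steep[OF \<open>t < \<xi>\<close>] \<open>N > 0\<close>] .
  moreover have "- 1 / r \<le> h (t + N) - h t"
    using h_bounds[of t] h_bounds[of "t + N"] \<open>0 < t\<close> \<open>N > 0\<close> by (simp add: diff_divide_distrib)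
  moreover have "N * \<beta> = 1 / r + \<beta>"
    using r_pos beta_pos by (simp add: N_def field_simps)
  ultimately show False
    using beta_pos by simp
qed

lemma h1_crossing_in_0_d:
  assumes "h1 0 = 0"
  shows "\<exists>zf\<in>{0<..d}. (\<forall>z\<in>{0..zf}. - \<beta> \<le> h1 z) \<and> (\<forall>z\<in>{zf<..d}. h1 z \<le> - \<beta>)"
proof (rule crossing_point_of_upward_closed_sublevel[OF d_pos])
  show "continuous_on {0..d} h1"
    by (rule continuous_on_subset[OF h1_cont]) auto
  show "- \<beta> < h1 0"
    using assms beta_pos by simp
  show "h1 t < - \<beta>" if "0 \<le> s" "s \<le> t" "t \<le> d" "h1 s < - \<beta>" for s t
  proof (rule ccontr)
    assume "\<not> h1 t < - \<beta>"
    moreover have "{0..t} \<subseteq> {0..d}"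
      using \<open>t \<le> d\<close> by auto
    ultimately show False
      using h1_no_dip_below[of 0 t s] that assms beta_pos by simp
  qed
qed

lemma h1_crossing_above_d:
  "\<exists>zg\<ge>d. (\<forall>z\<in>{d<..zg}. h1 z \<le> - \<beta>) \<and> (\<forall>z. zg \<le> z \<and> d < z \<longrightarrow> - \<beta> \<le> h1 z)"
proof -
  obtain b where "d < b" "- \<beta> \<le> h1 b"
    using h1_not_eventually_below[OF d_pos] by blast
  show ?thesis
  proof (rule crossing_point_of_downward_closed_sublevel[where f = h1, OF _ \<open>d < b\<close> \<open>- \<beta> \<le> h1 b\<close>])
    show "continuous_on {d<..} h1"
      by (rule continuous_on_subset[OF h1_cont]) (use d_pos in auto)
    show "h1 s < - \<beta>" if st: "d < s" "s \<le> t" "h1 t < - \<beta>" for s t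
    proof (rule ccontr)
      assume "\<not> h1 s < - \<beta>"
      obtain b' where "t < b'" "- \<beta> \<le> h1 b'"
        using h1_not_eventually_below[of t] st d_pos by auto
      moreover have "{s..b'} \<subseteq> {d<..}"
        using st(1) by auto
      ultimately show False
        using h1_no_dip_below[of s b' t] st \<open>\<not> h1 s < - \<beta>\<close> by simp
    qed
  qed
qed

lemma exponential_form_on:
  assumes "convex s"
    and region: "s \<subseteq> {0..d} \<and> R = 0 \<or> s \<subseteq> {d<..} \<and> R = 1"
    and control: "(\<forall>x\<in>s. - \<beta> \<le> h1 x) \<and> u = u0 \<or> (\<forall>x\<in>s. h1 x \<le> - \<beta>) \<and> u = 0"
  shows "\<exists>A B. \<forall>x\<in>s. h x = (\<beta> * u - R) / r
           + A * exp (theta1 \<mu> \<sigma> r u * x) + B * exp (- theta2 \<mu> \<sigma> r u * x)"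
proof (rule constant_control_hjb_solution[OF sigma_pos r_pos \<open>convex s\<close>])
  fix x assume "x \<in> s"
  from region consider "s \<subseteq> {0..d}" "R = 0" | "s \<subseteq> {d<..}" "R = 1"
    by blast
  note cases_region = this
  then have "0 \<le> x"
    using \<open>x \<in> s\<close> d_pos by cases auto
  show "(h has_real_derivative h1 x) (at x within s)"
    by (rule DERIV_subset[OF h_deriv[OF \<open>0 \<le> x\<close>]]) (use cases_region d_pos in \<open>cases; auto\<close>)
  show "(h1 has_real_derivative h2 x) (at x within s)"
    using cases_region
  proof cases
    case 1
    then show ?thesis
      using DERIV_subset h1_deriv_le_d \<open>x \<in> s\<close> by blast
  next
    case 2
    then show ?thesis
      using has_field_derivative_at_within h1_deriv_gt_d \<open>x \<in> s\<close> by blast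
  qed
  have "(if d < x then 1 else 0) = R"
    using cases_region \<open>x \<in> s\<close> by cases auto
  moreover from control consider "- \<beta> \<le> h1 x" "u = u0" | "h1 x \<le> - \<beta>" "u = 0"
    using \<open>x \<in> s\<close> by blast
  then have "max (\<beta> + h1 x) 0 * u0 = (\<beta> + h1 x) * u"
    by cases (auto simp: max_def)
  ultimately show "- r * h x - \<mu> * h1 x + \<sigma>\<^sup>2 / 2 * h2 x + (\<beta> + h1 x) * u = R"
    using hjb_max[OF \<open>0 \<le> x\<close>] by simp
qed

lemma piecewise_exponential_form:
  assumes "h1 0 = 0"
  shows "\<exists>zf zg A1 B1 A2 B2 a1 b1 a2 b2. zf \<in> {0<..d} \<and> zg \<in> {d..} \<and>
    (\<forall>z. 0 \<le> z \<and> z \<le> zf \<longrightarrow>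
       h z = \<beta> * u0 / r + A2 * exp (theta1 \<mu> \<sigma> r u0 * z) + B2 * exp (- theta2 \<mu> \<sigma> r u0 * z)) \<and>
    (\<forall>z. zf < z \<and> z \<le> d \<longrightarrow>
       h z = A1 * exp (theta1 \<mu> \<sigma> r 0 * z) + B1 * exp (- theta2 \<mu> \<sigma> r 0 * z)) \<and>
    (\<forall>z. d < z \<and> z \<le> zg \<longrightarrow>
       h z = - 1 / r + a1 * exp (theta1 \<mu> \<sigma> r 0 * z) + b1 * exp (- theta2 \<mu> \<sigma> r 0 * z)) \<and>
    (\<forall>z. zg \<le> z \<and> d < z \<longrightarrow>
       h z = (\<beta> * u0 - 1) / r + a2 * exp (theta1 \<mu> \<sigma> r u0 * z) + b2 * exp (- theta2 \<mu> \<sigma> r u0 * z))"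
proof -
  obtain zf where zf: "zf \<in> {0<..d}" "\<forall>z\<in>{0..zf}. - \<beta> \<le> h1 z" "\<forall>z\<in>{zf<..d}. h1 z \<le> - \<beta>"
    using h1_crossing_in_0_d[OF assms] by blast
  obtain zg where zg: "d \<le> zg" "\<forall>z\<in>{d<..zg}. h1 z \<le> - \<beta>" "\<forall>z. zg \<le> z \<and> d < z \<longrightarrow> - \<beta> \<le> h1 z"
    using h1_crossing_above_d by blast
  have on_0_zf: "\<exists>A B. \<forall>x\<in>{0..zf}. h x = (\<beta> * u0 - 0) / r
          + A * exp (theta1 \<mu> \<sigma> r u0 * x) + B * exp (- theta2 \<mu> \<sigma> r u0 * x)"
    by (rule exponential_form_on) (use zf in auto)
  have on_zf_d: "\<exists>A B. \<forall>x\<in>{zf<..d}. h x = (\<beta> * 0 - 0) / r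
          + A * exp (theta1 \<mu> \<sigma> r 0 * x) + B * exp (- theta2 \<mu> \<sigma> r 0 * x)"
    by (rule exponential_form_on) (use zf in auto)
  have on_d_zg: "\<exists>A B. \<forall>x\<in>{d<..zg}. h x = (\<beta> * 0 - 1) / r
          + A * exp (theta1 \<mu> \<sigma> r 0 * x) + B * exp (- theta2 \<mu> \<sigma> r 0 * x)"
    by (rule exponential_form_on) (use zg in auto)
  have on_zg: "\<exists>A B. \<forall>x\<in>{zg..} \<inter> {d<..}. h x = (\<beta> * u0 - 1) / r
          + A * exp (theta1 \<mu> \<sigma> r u0 * x) + B * exp (- theta2 \<mu> \<sigma> r u0 * x)"
    by (rule exponential_form_on) (use zg in \<open>auto simp: convex_Int\<close>)
  show ?thesis
    using zf(1) zg(1) on_0_zf on_zf_d on_d_zg on_zg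
    by (simp only: Ball_def Int_iff atLeast_iff greaterThan_iff atLeastAtMost_iff
        greaterThanAtMost_iff mult_zero_right diff_zero diff_0 div_0 add_0_left) blast
qed

end

theorem lemma2p3:
  fixes \<mu> \<sigma> u0 r \<beta> d :: real and h :: "real \<Rightarrow> real"
  assumes "\<sigma> > 0" "u0 > 0" "r > 0" "\<beta> > 0" "d > 0"
    and sol: "hjb_solution \<mu> \<sigma> u0 r \<beta> d h"
    and decr: "\<forall>x y. 0 \<le> x \<and> x \<le> y \<longrightarrow> h y \<le> h x"
    and h'0: "(h has_real_derivative 0) (at 0 within {0..})"
  shows "\<exists>zf zg A1 B1 A2 B2 a1 b1 a2 b2. zf \<in> {0<..d} \<and> zg \<in> {d..} \<and>
    (\<forall>z. 0 \<le> z \<and> z \<le> zf \<longrightarrow>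
       h z = \<beta> * u0 / r + A2 * exp (theta1 \<mu> \<sigma> r u0 * z) + B2 * exp (- theta2 \<mu> \<sigma> r u0 * z)) \<and>
    (\<forall>z. zf < z \<and> z \<le> d \<longrightarrow>
       h z = A1 * exp (theta1 \<mu> \<sigma> r 0 * z) + B1 * exp (- theta2 \<mu> \<sigma> r 0 * z)) \<and>
    (\<forall>z. d < z \<and> z \<le> zg \<longrightarrow>
       h z = - 1 / r + a1 * exp (theta1 \<mu> \<sigma> r 0 * z) + b1 * exp (- theta2 \<mu> \<sigma> r 0 * z)) \<and>
    (\<forall>z. zg \<le> z \<and> d < z \<longrightarrow>
       h z = (\<beta> * u0 - 1) / r + a2 * exp (theta1 \<mu> \<sigma> r u0 * z) + b2 * exp (- theta2 \<mu> \<sigma> r u0 * z))"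
proof -
  obtain h1 h2 where "hjb_classical_solution \<mu> \<sigma> u0 r \<beta> d h h1 h2"
    using sol assms(1-5) unfolding hjb_solution_def hjb_classical_solution_def by blast
  then interpret hjb_classical_solution \<mu> \<sigma> u0 r \<beta> d h h1 h2 .
  have "(h has_real_derivative h1 0) (at 0 within {0..1})"
    and "(h has_real_derivative 0) (at 0 within {0..1})"
    using DERIV_subset[OF h_deriv[of 0]] DERIV_subset[OF h'0] by auto
  then have "h1 0 = 0"
    by (rule has_field_derivative_unique) (simp add: at_within_Icc_at_right)
  then show ?thesis
    by (rule piecewise_exponential_form)
qed

end
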